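(* Let $p$ be a prime, let $\boldsymbol{\alpha}=(\alpha_1,\ldots,\alpha_r)$ be a basis for a finite abelian $p$-group $G$, and let $j,j',k',k$ be integers with $0\le j\le j'<k'\le k$. Let $\beta\in G(j,k)$. Then: (i) If $\mathbf{x}={\rm DL}_{\boldsymbol{\alpha}}(k',k,\beta^{p^{k'-j}})$ and $\gamma=\beta^{p^{j'-j}}\boldsymbol{\alpha}(j',k)^{-\mathbf{x}}$, then $\gamma\in G(j',k')$. (ii) If moreover $\mathbf{v}={\rm DL}_{\boldsymbol{\alpha}}(j',k',\gamma)$ and $\mathbf{s}=\mathbf{q}(j',k')/\mathbf{q}(j',k)$ (componentwise quotient), then $\mathbf{s}\mathbf{v}+\mathbf{x}={\rm DL}_{\boldsymbol{\alpha}}(j',k,\beta^{p^{j'-j}})$.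
   Context: A vector $\boldsymbol{\gamma}=(\gamma_1,\ldots,\gamma_s)$ of group elements (trivial entries allowed) is a basis for $\langle\boldsymbol{\gamma}\rangle$ if every $\beta\in\langle\boldsymbol{\gamma}\rangle$ can be written uniquely as $\boldsymbol{\gamma}^{\mathbf{x}}=\gamma_1^{x_1}\cdots\gamma_s^{x_s}$ with $0\le x_i<|\gamma_i|$; then ${\rm DL}(\boldsymbol{\gamma},\beta)=\mathbf{x}$, regarded as an element of $R_{\boldsymbol{\gamma}}=\prod_i\mathbb{Z}/|\gamma_i|\mathbb{Z}$ (integer vectors are identified with their reductions; exponentiation by an element of $R_{\boldsymbol{\gamma}}$ uses representatives). For nonnegative integers $a<b$: $G(a,b)=\{\beta^{p^a}:\beta\in G,\ \beta^{p^b}=1_G\}$; with $n_i=\log_p|\alpha_i|$ and $q_i=p^{\,a+\max(0,n_i-b)}$, $\mathbf{q}(a,b)=(q_1,\ldots,q_r)$ and $\boldsymbol{\alpha}(a,b)=(\alpha_1^{q_1},\ldots,\alpha_r^{q_r})$ (a basis of $G(a,b)$); ${\rm DL}_{\boldsymbol{\alpha}}(a,b,\delta)$ denotes ${\rm DL}(\boldsymbol{\alpha}(a,b),\delta)$ for $\delta\in G(a,b)$. Vector products such as $\mathbf{s}\mathbf{v}$ are componentwise. *)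

theory Defs
  imports "HOL-Algebra.Algebra" "HOL-Computational_Algebra.Primes"
begin

text \<open>Vectors of group elements / exponents are functions on indices; only indices
  i < r are relevant.  The vector power gamma^x = prod_{i<r} gamma_i^(x_i).\<close>

definition vpow :: "('a, 'b) monoid_scheme \<Rightarrow> (nat \<Rightarrow> 'a) \<Rightarrow> nat \<Rightarrow> (nat \<Rightarrow> int) \<Rightarrow> 'a" where
  "vpow G \<gamma> r x = finprod G (\<lambda>i. \<gamma> i [^]\<^bsub>G\<^esub> x i) {..<r}"

definition exp_box :: "('a, 'b) monoid_scheme \<Rightarrow> (nat \<Rightarrow> 'a) \<Rightarrow> nat \<Rightarrow> (nat \<Rightarrow> int) set" where
  "exp_box G \<gamma> r = {x. (\<forall>i<r. 0 \<le> x i \<and> x i < int (group.ord G (\<gamma> i))) \<and> (\<forall>i\<ge>r. x i = 0)}"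

definition is_basis :: "('a, 'b) monoid_scheme \<Rightarrow> (nat \<Rightarrow> 'a) \<Rightarrow> nat \<Rightarrow> bool" where
  "is_basis G \<gamma> r \<longleftrightarrow> (\<forall>i<r. \<gamma> i \<in> carrier G) \<and>
     (\<forall>\<beta> \<in> generate G (\<gamma> ` {..<r}). \<exists>!x. x \<in> exp_box G \<gamma> r \<and> \<beta> = vpow G \<gamma> r x)"

definition is_basis_of_group :: "('a, 'b) monoid_scheme \<Rightarrow> (nat \<Rightarrow> 'a) \<Rightarrow> nat \<Rightarrow> bool" where
  "is_basis_of_group G \<gamma> r \<longleftrightarrow> is_basis G \<gamma> r \<and> generate G (\<gamma> ` {..<r}) = carrier G"

definition DL :: "('a, 'b) monoid_scheme \<Rightarrow> (nat \<Rightarrow> 'a) \<Rightarrow> nat \<Rightarrow> 'a \<Rightarrow> (nat \<Rightarrow> int)" where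
  "DL G \<gamma> r \<beta> = (THE x. x \<in> exp_box G \<gamma> r \<and> \<beta> = vpow G \<gamma> r x)"

definition Gab :: "('a, 'b) monoid_scheme \<Rightarrow> nat \<Rightarrow> nat \<Rightarrow> nat \<Rightarrow> 'a set" where
  "Gab G p a b = {\<beta> [^]\<^bsub>G\<^esub> (p ^ a) | \<beta>. \<beta> \<in> carrier G \<and> \<beta> [^]\<^bsub>G\<^esub> (p ^ b) = \<one>\<^bsub>G\<^esub>}"

text \<open>n_i = log_p |alpha_i| and q_i = p^(a + max(0, n_i - b)) (nat subtraction is max(0,_)).\<close>
definition nlog :: "('a, 'b) monoid_scheme \<Rightarrow> nat \<Rightarrow> (nat \<Rightarrow> 'a) \<Rightarrow> nat \<Rightarrow> nat" where
  "nlog G p \<alpha> i = (THE n. group.ord G (\<alpha> i) = p ^ n)"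

definition qvec :: "('a, 'b) monoid_scheme \<Rightarrow> nat \<Rightarrow> (nat \<Rightarrow> 'a) \<Rightarrow> nat \<Rightarrow> nat \<Rightarrow> nat \<Rightarrow> nat" where
  "qvec G p \<alpha> a b i = p ^ (a + (nlog G p \<alpha> i - b))"

definition alpha_ab :: "('a, 'b) monoid_scheme \<Rightarrow> nat \<Rightarrow> (nat \<Rightarrow> 'a) \<Rightarrow> nat \<Rightarrow> nat \<Rightarrow> nat \<Rightarrow> 'a" where
  "alpha_ab G p \<alpha> a b i = \<alpha> i [^]\<^bsub>G\<^esub> qvec G p \<alpha> a b i"

definition DL_ab :: "('a, 'b) monoid_scheme \<Rightarrow> nat \<Rightarrow> (nat \<Rightarrow> 'a) \<Rightarrow> nat \<Rightarrow> nat \<Rightarrow> nat \<Rightarrow> 'a \<Rightarrow> (nat \<Rightarrow> int)" where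
  "DL_ab G p \<alpha> r a b \<delta> = DL G (alpha_ab G p \<alpha> a b) r \<delta>"

end

theory Submission
  imports Defs
begin

text \<open>Write \<open>\<beta> = \<delta>^(p^j)\<close> with \<open>\<delta>^(p^k) = 1\<close>. Because \<open>\<alpha>\<close> is a basis, \<open>\<delta>^(p^k) = 1\<close> forces the
  \<open>i\<close>-th coordinate of \<open>\<delta>\<close> to be a multiple \<open>p^(n\<^sub>i - k) u\<^sub>i\<close>, so every power \<open>\<delta>^(p^a)\<close> has
  the same coordinate vector \<open>u\<close> with respect to \<open>\<alpha>(a,k)\<close>. Hence \<open>x\<close> is \<open>u\<close> reduced modulo the
  orders of \<open>\<alpha>(k',k)\<close>, and \<open>\<gamma>\<close> has coordinates \<open>u - x\<close> with respect to \<open>\<alpha>(j',k)\<close>; these are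
  divisible by those orders, which is what puts \<open>\<gamma>\<close> into \<open>G(j',k')\<close>. Finally
  \<open>\<alpha>(j',k') = \<alpha>(j',k)^s\<close>, so \<open>s v\<close> and \<open>u - x\<close> are two coordinate vectors of \<open>\<gamma>\<close> with respect
  to the basis \<open>\<alpha>(j',k)\<close>, and therefore agree modulo its orders.\<close>

context comm_group
begin

lemma vpow_closed: "\<forall>i<r. \<gamma> i \<in> carrier G \<Longrightarrow> vpow G \<gamma> r x \<in> carrier G"
  unfolding vpow_def by (intro finprod_closed) auto

lemma vpow_cong:
  assumes "\<And>i. i < r \<Longrightarrow> \<gamma> i [^] x i = \<gamma>' i [^] (x' i :: int)" and "\<forall>i<r. \<gamma>' i \<in> carrier G"
  shows "vpow G \<gamma> r x = vpow G \<gamma>' r x'"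
  unfolding vpow_def using assms by (intro finprod_cong') auto

lemma vpow_mult:
  assumes "\<forall>i<r. \<gamma> i \<in> carrier G"
  shows "vpow G \<gamma> r x \<otimes> vpow G \<gamma> r y = vpow G \<gamma> r (\<lambda>i. x i + y i)"
proof -
  have "vpow G \<gamma> r x \<otimes> vpow G \<gamma> r y = finprod G (\<lambda>i. \<gamma> i [^] x i \<otimes> \<gamma> i [^] y i) {..<r}"
    unfolding vpow_def using assms by (subst finprod_multf) auto
  also have "\<dots> = vpow G \<gamma> r (\<lambda>i. x i + y i)"
    unfolding vpow_def using assms by (intro finprod_cong') (auto simp: int_pow_mult)
  finally show ?thesis .
qed

lemma vpow_zero: "vpow G \<gamma> r (\<lambda>i. 0) = \<one>"
  unfolding vpow_def by (intro finprod_one_eqI) simp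

lemma vpow_eq_one:
  assumes "\<forall>i<r. \<gamma> i \<in> carrier G" and "\<forall>i<r. int (ord (\<gamma> i)) dvd x i"
  shows "vpow G \<gamma> r x = \<one>"
  unfolding vpow_def by (rule finprod_one_eqI) (use assms in \<open>auto simp: int_pow_eq_id\<close>)

lemma vpow_nat_pow:
  assumes "\<forall>i<r. \<gamma> i \<in> carrier G"
  shows "vpow G \<gamma> r x [^] (m::nat) = vpow G \<gamma> r (\<lambda>i. int m * x i)"
proof (induction m)
  case 0
  then show ?case using vpow_zero by simp
next
  case (Suc m)
  have "vpow G \<gamma> r x [^] Suc m = vpow G \<gamma> r (\<lambda>i. int m * x i + x i)"
    using Suc vpow_mult[OF assms] by simp
  also have "(\<lambda>i. int m * x i + x i) = (\<lambda>i. int (Suc m) * x i)"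
    by (auto simp: algebra_simps)
  finally show ?case .
qed

lemma vpow_pow_base:
  assumes "\<forall>i<r. \<alpha> i \<in> carrier G" and "\<forall>i<r. \<gamma> i = \<alpha> i [^] (c i :: nat)"
  shows "vpow G \<gamma> r x = vpow G \<alpha> r (\<lambda>i. int (c i) * x i)"
  using assms by (intro vpow_cong) (auto simp: int_pow_pow simp flip: int_pow_int)

lemma vpow_reduce:
  assumes "\<forall>i<r. \<gamma> i \<in> carrier G"
  shows "vpow G \<gamma> r (\<lambda>i. if i < r then x i mod int (ord (\<gamma> i)) else 0) = vpow G \<gamma> r x"
  using assms by (intro vpow_cong) (auto simp: int_pow_eq simp flip: mod_eq_dvd_iff)

lemma vpow_alpha_ab:
  assumes "\<forall>i<r. \<alpha> i \<in> carrier G"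
  shows "vpow G (alpha_ab G p \<alpha> a b) r u = vpow G \<alpha> r (\<lambda>i. int (qvec G p \<alpha> a b i) * u i)"
  using assms by (intro vpow_pow_base) (auto simp: alpha_ab_def)

lemma alpha_ab_eq_pow:
  assumes "\<alpha> i \<in> carrier G" and "b \<le> b'"
  shows "alpha_ab G p \<alpha> a b i = alpha_ab G p \<alpha> a b' i [^] (qvec G p \<alpha> a b i div qvec G p \<alpha> a b' i)"
proof -
  have "qvec G p \<alpha> a b' i dvd qvec G p \<alpha> a b i"
    unfolding qvec_def using \<open>b \<le> b'\<close> by (intro le_imp_power_dvd) arith
  then show ?thesis
    using assms(1) by (simp add: alpha_ab_def nat_pow_pow)
qed

end

locale basis_of_group = comm_group +
  fixes \<alpha> :: "nat \<Rightarrow> 'a" and r :: nat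
  assumes finite_carrier: "finite (carrier G)"
    and basis: "is_basis_of_group G \<alpha> r"
begin

lemma alpha_closed: "\<forall>i<r. \<alpha> i \<in> carrier G"
  using basis by (simp add: is_basis_of_group_def is_basis_def)

lemma ex_vpow_eq: "\<delta> \<in> carrier G \<Longrightarrow> \<exists>y. \<delta> = vpow G \<alpha> r y"
  using basis unfolding is_basis_of_group_def is_basis_def by blast

lemma ord_pos: "g \<in> carrier G \<Longrightarrow> int (ord g) > 0"
  using ord_ge_1[OF finite_carrier] by fastforce

lemma basis_coords_dvd:
  assumes eq: "vpow G \<alpha> r x = vpow G \<alpha> r x'" and i: "i < r"
  shows "int (ord (\<alpha> i)) dvd x i - x' i"
proof -
  define red where "red z = (\<lambda>i. if i < r then z i mod int (ord (\<alpha> i)) else 0)" for z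
  have red_box: "red z \<in> exp_box G \<alpha> r" for z
    using ord_pos alpha_closed by (simp add: exp_box_def red_def)
  have vpow_red: "vpow G \<alpha> r (red z) = vpow G \<alpha> r z" for z
    unfolding red_def by (rule vpow_reduce[OF alpha_closed])
  have "vpow G \<alpha> r x \<in> generate G (\<alpha> ` {..<r})"
    using basis vpow_closed[OF alpha_closed] by (simp add: is_basis_of_group_def)
  then have "\<exists>!z. z \<in> exp_box G \<alpha> r \<and> vpow G \<alpha> r x = vpow G \<alpha> r z"
    using basis by (simp add: is_basis_of_group_def is_basis_def)
  then have "red x = red x'"
    using red_box vpow_red eq by metis
  then have "x i mod int (ord (\<alpha> i)) = x' i mod int (ord (\<alpha> i))"
    using i unfolding red_def by meson
  then show ?thesis by (simp add: mod_eq_dvd_iff)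
qed

lemma pow_basis_coords_dvd:
  assumes \<gamma>: "\<forall>i<r. \<gamma> i = \<alpha> i [^] (c i :: nat)"
    and eq: "vpow G \<gamma> r x = vpow G \<gamma> r x'" and i: "i < r"
  shows "int (ord (\<gamma> i)) dvd x i - x' i"
proof -
  have "vpow G \<alpha> r (\<lambda>i. int (c i) * x i) = vpow G \<alpha> r (\<lambda>i. int (c i) * x' i)"
    using eq vpow_pow_base[OF alpha_closed \<gamma>] by simp
  from basis_coords_dvd[OF this i]
  have "int (ord (\<alpha> i)) dvd int (c i) * (x i - x' i)"
    by (simp add: algebra_simps)
  then have "(\<alpha> i [^] int (c i)) [^] (x i - x' i) = \<one>"
    using alpha_closed i by (simp add: int_pow_eq_id int_pow_pow)
  then have "\<gamma> i [^] (x i - x' i) = \<one>"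
    using \<gamma> i by (simp add: int_pow_int)
  then show ?thesis
    using \<gamma> i alpha_closed by (simp add: int_pow_eq_id)
qed

lemma DL_vpow_pow_basis:
  assumes \<gamma>: "\<forall>i<r. \<gamma> i = \<alpha> i [^] (c i :: nat)"
  shows "DL G \<gamma> r (vpow G \<gamma> r z) = (\<lambda>i. if i < r then z i mod int (ord (\<gamma> i)) else 0)"
    (is "_ = ?z")
  unfolding DL_def
proof (rule the_equality)
  have \<gamma>_closed: "\<forall>i<r. \<gamma> i \<in> carrier G"
    using alpha_closed \<gamma> by auto
  have "?z \<in> exp_box G \<gamma> r"
    using ord_pos \<gamma>_closed by (simp add: exp_box_def)
  moreover have "vpow G \<gamma> r z = vpow G \<gamma> r ?z"
    by (rule vpow_reduce[OF \<gamma>_closed, symmetric])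
  ultimately show "?z \<in> exp_box G \<gamma> r \<and> vpow G \<gamma> r z = vpow G \<gamma> r ?z" ..
next
  fix x assume x: "x \<in> exp_box G \<gamma> r \<and> vpow G \<gamma> r z = vpow G \<gamma> r x"
  show "x = ?z"
  proof
    fix i show "x i = ?z i"
    proof (cases "i < r")
      case True
      have "int (ord (\<gamma> i)) dvd z i - x i"
        using pow_basis_coords_dvd[OF \<gamma> _ True] x by blast
      then have "z i mod int (ord (\<gamma> i)) = x i mod int (ord (\<gamma> i))"
        by (simp add: mod_eq_dvd_iff)
      moreover have "x i mod int (ord (\<gamma> i)) = x i"
        using x True by (simp add: exp_box_def)
      ultimately show ?thesis
        using True by simp
    next
      case False
      then show ?thesis using x by (simp add: exp_box_def)
    qed
  qed
qed

end

lemma power_dvd_mult_power_cancel: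
  fixes p y :: int
  assumes "p > 0" and "p ^ n dvd p ^ b * y"
  shows "p ^ (n - b) dvd y"
proof (cases "n \<le> b")
  case False
  then have "p ^ n = p ^ b * p ^ (n - b)" by (simp flip: power_add)
  then show ?thesis using assms by simp
qed simp

locale p_group_basis = basis_of_group +
  fixes p :: nat
  assumes prime_p: "Factorial_Ring.prime p"
    and order_p_power: "\<exists>m. order G = p ^ m"
begin

lemma p_pos: "p > 0"
  using prime_gt_0_nat[OF prime_p] .

lemma ord_alpha: "i < r \<Longrightarrow> ord (\<alpha> i) = p ^ nlog G p \<alpha> i"
proof -
  assume i: "i < r"
  obtain m where "order G = p ^ m" using order_p_power by blast
  then have "ord (\<alpha> i) dvd p ^ m"
    using ord_dvd_group_order alpha_closed i by metis
  then obtain e where e: "ord (\<alpha> i) = p ^ e"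
    using divides_primepow[OF prime_p, of "ord (\<alpha> i)" m] by auto
  have "(THE e. ord (\<alpha> i) = p ^ e) = e"
    using e prime_gt_1_nat[OF prime_p] power_inject_exp by (intro the_equality) auto
  then show ?thesis
    unfolding nlog_def using e by simp
qed

lemma DL_ab_vpow_alpha_ab:
  "DL_ab G p \<alpha> r a b (vpow G (alpha_ab G p \<alpha> a b) r z)
     = (\<lambda>i. if i < r then z i mod int (ord (alpha_ab G p \<alpha> a b i)) else 0)"
  unfolding DL_ab_def by (rule DL_vpow_pow_basis[of _ "qvec G p \<alpha> a b"]) (simp add: alpha_ab_def)

lemma vpow_kernel_dvd:
  assumes "vpow G \<alpha> r (\<lambda>i. int (p ^ b) * y i) = \<one>" and i: "i < r"
  shows "int (p ^ (nlog G p \<alpha> i - b)) dvd y i"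
proof -
  have "vpow G \<alpha> r (\<lambda>i. int (p ^ b) * y i) = vpow G \<alpha> r (\<lambda>i. 0)"
    using assms(1) vpow_zero by simp
  from basis_coords_dvd[OF this i]
  have "int p ^ nlog G p \<alpha> i dvd int p ^ b * y i"
    using ord_alpha[OF i] by simp
  from power_dvd_mult_power_cancel[OF _ this] p_pos show ?thesis by simp
qed

lemma torsion_pow_eq_vpow_alpha_ab:
  assumes \<delta>: "\<delta> \<in> carrier G" "\<delta> [^] (p ^ b) = \<one>"
  obtains u where "\<And>a. \<delta> [^] (p ^ a) = vpow G (alpha_ab G p \<alpha> a b) r u"
proof -
  obtain y where y: "\<delta> = vpow G \<alpha> r y"
    using ex_vpow_eq[OF \<delta>(1)] by blast
  have "vpow G \<alpha> r (\<lambda>i. int (p ^ b) * y i) = \<one>"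
    using \<delta> y vpow_nat_pow[OF alpha_closed] by simp
  then have dvd: "\<forall>i<r. int (p ^ (nlog G p \<alpha> i - b)) dvd y i"
    using vpow_kernel_dvd by blast
  define u where "u i = y i div int (p ^ (nlog G p \<alpha> i - b))" for i
  have "\<delta> [^] (p ^ a) = vpow G (alpha_ab G p \<alpha> a b) r u" for a
  proof -
    have "\<delta> [^] (p ^ a) = vpow G \<alpha> r (\<lambda>i. int (p ^ a) * y i)"
      using y vpow_nat_pow[OF alpha_closed] by simp
    also have "\<dots> = vpow G \<alpha> r (\<lambda>i. int (qvec G p \<alpha> a b i) * u i)"
      using dvd alpha_closed
      by (intro vpow_cong) (auto simp: qvec_def u_def power_add mult.assoc)
    finally show ?thesis
      using vpow_alpha_ab[OF alpha_closed] by simp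
  qed
  then show ?thesis by (rule that)
qed

lemma Gab_pow_eq_vpow_alpha_ab:
  assumes "\<beta> \<in> Gab G p j k"
  obtains u where "\<And>e. \<beta> [^] (p ^ e) = vpow G (alpha_ab G p \<alpha> (j + e) k) r u"
proof -
  obtain \<delta> where \<delta>: "\<delta> \<in> carrier G" "\<delta> [^] (p ^ k) = \<one>" and \<beta>: "\<beta> = \<delta> [^] (p ^ j)"
    using assms unfolding Gab_def by blast
  obtain u where u: "\<And>a. \<delta> [^] (p ^ a) = vpow G (alpha_ab G p \<alpha> a k) r u"
    using torsion_pow_eq_vpow_alpha_ab[OF \<delta>] by blast
  have "\<beta> [^] (p ^ e) = vpow G (alpha_ab G p \<alpha> (j + e) k) r u" for e
    using u[of "j + e"] \<beta> \<delta>(1) by (simp add: nat_pow_pow power_add)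
  then show ?thesis by (rule that)
qed

lemma vpow_alpha_ab_sub_mod_in_Gab:
  assumes "k' \<le> k"
  shows "vpow G (alpha_ab G p \<alpha> j' k) r (\<lambda>i. u i - u i mod int (ord (alpha_ab G p \<alpha> k' k i)))
           \<in> Gab G p j' k'"
proof -
  define z where "z i = u i - u i mod int (ord (alpha_ab G p \<alpha> k' k i))" for i
  define \<epsilon> where "\<epsilon> = vpow G \<alpha> r (\<lambda>i. int (p ^ (nlog G p \<alpha> i - k)) * z i)"
  have \<epsilon>_pow: "\<epsilon> [^] (p ^ a) = vpow G (alpha_ab G p \<alpha> a k) r z" for a
    unfolding \<epsilon>_def vpow_nat_pow[OF alpha_closed] vpow_alpha_ab[OF alpha_closed]
    by (simp add: qvec_def power_add mult.assoc)
  have "\<epsilon> [^] (p ^ k') = \<one>"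
    unfolding \<epsilon>_pow z_def
    by (rule vpow_eq_one) (auto simp: alpha_ab_def alpha_closed minus_mod_eq_mult_div)
  moreover have "\<epsilon> \<in> carrier G"
    unfolding \<epsilon>_def by (rule vpow_closed[OF alpha_closed])
  ultimately show ?thesis
    unfolding Gab_def z_def[symmetric] \<epsilon>_pow[symmetric] by blast
qed

lemma Gab_DL_ab_scaled_cong:
  assumes \<gamma>: "\<gamma> \<in> Gab G p a b" "\<gamma> = vpow G (alpha_ab G p \<alpha> a b') r z"
    and "b \<le> b'" and i: "i < r"
  shows "int (ord (alpha_ab G p \<alpha> a b' i))
           dvd int (qvec G p \<alpha> a b i div qvec G p \<alpha> a b' i) * DL_ab G p \<alpha> r a b \<gamma> i - z i"
proof -
  define s where "s i = qvec G p \<alpha> a b i div qvec G p \<alpha> a b' i" for i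
  have A_closed: "\<forall>i<r. alpha_ab G p \<alpha> a c i \<in> carrier G" for c
    using alpha_closed by (simp add: alpha_ab_def)
  obtain t where t: "\<And>e. \<gamma> [^] (p ^ e) = vpow G (alpha_ab G p \<alpha> (a + e) b) r t"
    using Gab_pow_eq_vpow_alpha_ab[OF \<gamma>(1)] by blast
  have "\<gamma> \<in> carrier G"
    using \<gamma>(1) unfolding Gab_def by auto
  with t[of 0] have t: "\<gamma> = vpow G (alpha_ab G p \<alpha> a b) r t"
    by simp
  have "vpow G (alpha_ab G p \<alpha> a b') r (\<lambda>i. int (s i) * DL_ab G p \<alpha> r a b \<gamma> i)
          = vpow G (alpha_ab G p \<alpha> a b) r (DL_ab G p \<alpha> r a b \<gamma>)"
  proof (rule vpow_cong[OF _ A_closed])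
    fix i assume "i < r"
    then have "alpha_ab G p \<alpha> a b i = alpha_ab G p \<alpha> a b' i [^] s i"
      using alpha_closed alpha_ab_eq_pow[OF _ \<open>b \<le> b'\<close>] by (simp add: s_def)
    then show "alpha_ab G p \<alpha> a b' i [^] (int (s i) * DL_ab G p \<alpha> r a b \<gamma> i)
                 = alpha_ab G p \<alpha> a b i [^] DL_ab G p \<alpha> r a b \<gamma> i"
      using A_closed \<open>i < r\<close> by (simp add: int_pow_pow flip: int_pow_int)
  qed
  also have "\<dots> = vpow G (alpha_ab G p \<alpha> a b) r t"
    unfolding t DL_ab_vpow_alpha_ab by (rule vpow_reduce[OF A_closed])
  also have "\<dots> = vpow G (alpha_ab G p \<alpha> a b') r z"
    using t \<gamma>(2) by simp
  finally have "vpow G (alpha_ab G p \<alpha> a b') r (\<lambda>i. int (s i) * DL_ab G p \<alpha> r a b \<gamma> i)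
                  = vpow G (alpha_ab G p \<alpha> a b') r z" .
  from pow_basis_coords_dvd[of _ "qvec G p \<alpha> a b'", OF _ this i] show ?thesis
    by (simp add: s_def alpha_ab_def)
qed

end

theorem lemma2:
  fixes G :: "('a, 'b) monoid_scheme" and p r j j' k' k :: nat
    and \<alpha> :: "nat \<Rightarrow> 'a" and \<beta> :: 'a
  assumes "comm_group G" and "finite (carrier G)"
    and "Factorial_Ring.prime p" and "\<exists>m. order G = p ^ m"
    and "is_basis_of_group G \<alpha> r"
    and "j \<le> j'" and "j' < k'" and "k' \<le> k"
    and "\<beta> \<in> Gab G p j k"
  shows "let x = DL_ab G p \<alpha> r k' k (\<beta> [^]\<^bsub>G\<^esub> (p ^ (k' - j)));
             \<gamma> = \<beta> [^]\<^bsub>G\<^esub> (p ^ (j' - j)) \<otimes>\<^bsub>G\<^esub> vpow G (alpha_ab G p \<alpha> j' k) r (\<lambda>i. - x i)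
         in \<gamma> \<in> Gab G p j' k' \<and>
            (let v = DL_ab G p \<alpha> r j' k' \<gamma>;
                 s = (\<lambda>i. qvec G p \<alpha> j' k' i div qvec G p \<alpha> j' k i);
                 w = DL_ab G p \<alpha> r j' k (\<beta> [^]\<^bsub>G\<^esub> (p ^ (j' - j)))
             in \<forall>i<r. (int (s i) * v i + x i) mod int (group.ord G (alpha_ab G p \<alpha> j' k i)) = w i)"
proof -
  interpret p_group_basis G \<alpha> r p
    using assms(1-5)
    by (simp add: p_group_basis_def p_group_basis_axioms_def basis_of_group_def basis_of_group_axioms_def)
  let ?A = "alpha_ab G p \<alpha>"
  obtain u where u: "\<And>e. \<beta> [^]\<^bsub>G\<^esub> (p ^ e) = vpow G (?A (j + e) k) r u"
    using Gab_pow_eq_vpow_alpha_ab[OF assms(9)] by blast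
  define x where "x = DL_ab G p \<alpha> r k' k (\<beta> [^]\<^bsub>G\<^esub> (p ^ (k' - j)))"
  have x: "x = (\<lambda>i. if i < r then u i mod int (group.ord G (?A k' k i)) else 0)"
    using u[of "k' - j"] assms(6,7) by (simp add: x_def DL_ab_vpow_alpha_ab)
  define \<gamma> where "\<gamma> = \<beta> [^]\<^bsub>G\<^esub> (p ^ (j' - j)) \<otimes>\<^bsub>G\<^esub> vpow G (?A j' k) r (\<lambda>i. - x i)"
  have \<gamma>_eq: "\<gamma> = vpow G (?A j' k) r (\<lambda>i. u i - x i)"
    using u[of "j' - j"] assms(6) vpow_mult[of r "?A j' k"] alpha_closed
    by (simp add: \<gamma>_def alpha_ab_def)
  have "vpow G (?A j' k) r (\<lambda>i. u i - x i)
          = vpow G (?A j' k) r (\<lambda>i. u i - u i mod int (group.ord G (?A k' k i)))"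
    using alpha_closed by (intro vpow_cong) (auto simp: x alpha_ab_def)
  then have \<gamma>_Gab: "\<gamma> \<in> Gab G p j' k'"
    using \<gamma>_eq vpow_alpha_ab_sub_mod_in_Gab[OF assms(8)] by simp
  have w: "DL_ab G p \<alpha> r j' k (\<beta> [^]\<^bsub>G\<^esub> (p ^ (j' - j)))
             = (\<lambda>i. if i < r then u i mod int (group.ord G (?A j' k i)) else 0)"
    using u[of "j' - j"] assms(6) by (simp add: DL_ab_vpow_alpha_ab)
  show ?thesis
    using \<gamma>_Gab Gab_DL_ab_scaled_cong[OF \<gamma>_Gab \<gamma>_eq assms(8)]
    unfolding Let_def x_def[symmetric] \<gamma>_def[symmetric] w
    by (auto simp: mod_eq_dvd_iff algebra_simps)
qed

end
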